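(* Let $\Gamma$ be a strongly regular graph. Then $E(\Gamma)=E(\bar\Gamma)$ and $\Gamma$, $\bar\Gamma$ are not isospectral if and only if $\Gamma$ has $OA(n,m)$ parameters, i.e. parameters $(n^2, m(n-1), m^2-3m+n, m(m-1))$, for some positive integers $n,m$ with $m\neq n+1$ and $m\neq \tfrac{n+1}{2}$.
   Context: A strongly regular graph with parameters $(n,k,e,d)$ is a $k$-regular simple graph on $n$ vertices, neither complete nor edgeless, in which adjacent vertices have $e$ common neighbours and distinct non-adjacent vertices have $d$ common neighbours. $\bar\Gamma$ is the complement. The energy $E$ is the sum of the absolute values of the adjacency eigenvalues (with multiplicity); isospectral means equal adjacency spectra with multiplicities. *)

theory Defs
  imports "Jordan_Normal_Form.Char_Poly"
begin

definition simple_graph :: "nat \<Rightarrow> (nat \<Rightarrow> nat \<Rightarrow> bool) \<Rightarrow> bool" where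
  "simple_graph N E \<longleftrightarrow>
     (\<forall>i<N. \<forall>j<N. E i j \<longleftrightarrow> E j i) \<and> (\<forall>i<N. \<not> E i i)"

definition complement :: "(nat \<Rightarrow> nat \<Rightarrow> bool) \<Rightarrow> nat \<Rightarrow> nat \<Rightarrow> bool" where
  "complement E i j \<longleftrightarrow> i \<noteq> j \<and> \<not> E i j"

definition srg_params ::
  "nat \<Rightarrow> (nat \<Rightarrow> nat \<Rightarrow> bool) \<Rightarrow> nat \<Rightarrow> nat \<Rightarrow> nat \<Rightarrow> bool" where
  "srg_params N E k e d \<longleftrightarrow>
     simple_graph N E \<and>
     (\<exists>i<N. \<exists>j<N. E i j) \<and>
     (\<exists>i<N. \<exists>j<N. i \<noteq> j \<and> \<not> E i j) \<and>
     (\<forall>i<N. card {x. x < N \<and> E i x} = k) \<and>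
     (\<forall>i<N. \<forall>j<N. E i j \<longrightarrow> card {x. x < N \<and> E i x \<and> E j x} = e) \<and>
     (\<forall>i<N. \<forall>j<N. i \<noteq> j \<and> \<not> E i j \<longrightarrow> card {x. x < N \<and> E i x \<and> E j x} = d)"

definition strongly_regular :: "nat \<Rightarrow> (nat \<Rightarrow> nat \<Rightarrow> bool) \<Rightarrow> bool" where
  "strongly_regular N E \<longleftrightarrow> (\<exists>k e d. srg_params N E k e d)"

definition adj_matrix :: "nat \<Rightarrow> (nat \<Rightarrow> nat \<Rightarrow> bool) \<Rightarrow> complex mat" where
  "adj_matrix N E = mat N N (\<lambda>(i, j). if E i j then 1 else 0)"

definition adj_spectrum :: "nat \<Rightarrow> (nat \<Rightarrow> nat \<Rightarrow> bool) \<Rightarrow> complex multiset" where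
  "adj_spectrum N E = proots (char_poly (adj_matrix N E))"

definition energy :: "nat \<Rightarrow> (nat \<Rightarrow> nat \<Rightarrow> bool) \<Rightarrow> real" where
  "energy N E = sum_mset (image_mset cmod (adj_spectrum N E))"

definition isospectral ::
  "nat \<Rightarrow> (nat \<Rightarrow> nat \<Rightarrow> bool) \<Rightarrow> nat \<Rightarrow> (nat \<Rightarrow> nat \<Rightarrow> bool) \<Rightarrow> bool" where
  "isospectral N E N' E' \<longleftrightarrow> adj_spectrum N E = adj_spectrum N' E'"

end

theory Submission
  imports Defs "Jordan_Normal_Form.Schur_Decomposition"
begin

text \<open>
  The adjacency matrix of a strongly regular graph satisfies
  \<open>A\<^sup>2 = k I + e A + d (J - I - A)\<close>, so its eigenvalues are \<open>k\<close> and the two roots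
  \<open>r \<ge> 0 > s\<close> of \<open>x\<^sup>2 - (e - d) x - (k - d)\<close>. Since \<open>tr A = 0\<close> and \<open>tr A\<^sup>2 = N k\<close>,
  the energy is \<open>2 N k (1 + r) (-s) / ((k - s) (r - s))\<close>. The complement is strongly regular
  with eigenvalues \<open>-1 - s\<close> and \<open>-1 - r\<close>, so equal energies amount to
  \<open>k (N - k + r) = (N - k - 1) (k - s)\<close>; together with \<open>k (k - e - 1) = (N - k - 1) d\<close> this
  forces \<open>k = s (1 + s - r)\<close> and \<open>N = (r - s)\<^sup>2\<close>. If \<open>r + s = -1\<close>, the graph and its
  complement have the same parameters and hence the same spectrum. Otherwise \<open>s\<close> is rational,
  hence an integer, and \<open>n = r - s\<close>, \<open>m = -s\<close> give the OA parameters. Conversely,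
  isospectrality with the complement forces \<open>N = 2 k + 1\<close>, which for OA parameters means
  \<open>n = 1\<close> or \<open>2 m = n + 1\<close>.
\<close>

section \<open>Traces and characteristic roots\<close>

definition mat_trace :: "'a::comm_semiring_0 mat \<Rightarrow> 'a" where
  "mat_trace A = (\<Sum>i = 0..<dim_row A. A $$ (i, i))"

lemma mat_trace_mult_comm:
  assumes "A \<in> carrier_mat n m" and "B \<in> carrier_mat m n"
  shows "mat_trace (A * B) = mat_trace (B * A)"
proof -
  have "mat_trace (A * B) = (\<Sum>i = 0..<n. \<Sum>j = 0..<m. A $$ (i, j) * B $$ (j, i))"
    using assms by (simp add: mat_trace_def scalar_prod_def)
  also have "\<dots> = (\<Sum>j = 0..<m. \<Sum>i = 0..<n. B $$ (j, i) * A $$ (i, j))"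
    by (subst sum.swap) (simp add: mult.commute)
  also have "\<dots> = mat_trace (B * A)"
    using assms by (simp add: mat_trace_def scalar_prod_def)
  finally show ?thesis .
qed

lemma mat_trace_similar:
  assumes A: "A \<in> carrier_mat n n" and sim: "similar_mat_wit A B P Q"
  shows "mat_trace A = mat_trace B"
proof -
  note wit = similar_mat_witD2[OF A sim]
  have "mat_trace A = mat_trace (P * B * Q)" using wit by simp
  also have "\<dots> = mat_trace (Q * (P * B))"
    using wit by (intro mat_trace_mult_comm[of _ n n]) auto
  also have "Q * (P * B) = (Q * P) * B" using wit by (metis assoc_mult_mat)
  also have "\<dots> = B" using wit by simp
  finally show ?thesis .
qed

lemma mat_trace_upper_triangular_square:
  fixes B :: "'a::comm_semiring_1 mat"
  assumes B: "B \<in> carrier_mat n n" and "upper_triangular B"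
  shows "mat_trace (B * B) = (\<Sum>i = 0..<n. (B $$ (i, i))\<^sup>2)"
proof -
  have entry: "B $$ (i, j) * B $$ (j, i) = (if j = i then B $$ (i, i) * B $$ (i, i) else 0)"
    if "i < n" "j < n" for i j
    using assms that unfolding upper_triangular_def by (cases i j rule: linorder_cases) auto
  have "mat_trace (B * B) = (\<Sum>i = 0..<n. \<Sum>j = 0..<n. B $$ (i, j) * B $$ (j, i))"
    using B by (simp add: mat_trace_def scalar_prod_def)
  also have "\<dots> = (\<Sum>i = 0..<n. \<Sum>j = 0..<n. if j = i then B $$ (i, i) * B $$ (i, i) else 0)"
    using entry by (intro sum.cong refl) simp
  also have "\<dots> = (\<Sum>i = 0..<n. (B $$ (i, i))\<^sup>2)" by (simp add: power2_eq_square)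
  finally show ?thesis .
qed

lemma proots_prod_linear_factors: "proots (\<Prod>a\<leftarrow>as. [:- a, 1:]) = mset (as :: 'a::idom list)"
proof (induction as)
  case (Cons a as)
  have "(\<Prod>a\<leftarrow>as. [:- a, 1:]) \<noteq> 0" by (auto simp: prod_list_zero_iff)
  then show ?case using Cons by (simp add: proots_mult del: mult_pCons_left)
qed simp

lemma proots_char_poly_power_sums:
  fixes A :: "complex mat"
  assumes A: "A \<in> carrier_mat n n"
  shows "size (proots (char_poly A)) = n"
    and "sum_mset (proots (char_poly A)) = mat_trace A"
    and "(\<Sum>x\<in>#proots (char_poly A). x\<^sup>2) = mat_trace (A * A)"
proof -
  obtain as where cp: "char_poly A = (\<Prod>a\<leftarrow>as. [:- a, 1:])" and len: "length as = n"
    using char_poly_factorized[OF A] by blast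
  have roots: "proots (char_poly A) = mset as"
    unfolding cp by (rule proots_prod_linear_factors)
  obtain B P Q where sd: "schur_decomposition A as = (B, P, Q)"
    by (cases "schur_decomposition A as") auto
  from schur_decomposition[OF A cp sd] have sim: "similar_mat_wit A B P Q"
    and ut: "upper_triangular B" and diag: "diag_mat B = as" by auto
  note wit = similar_mat_witD2[OF A sim]
  have B: "B \<in> carrier_mat n n" using wit by auto
  have sim2: "similar_mat_wit (A * A) (B * B) P Q"
    using similar_mat_wit_pow_id[OF sim, of 2] wit
    by (intro similar_mat_witI[of _ _ n]) (auto simp: numeral_2_eq_2)
  have as_nth: "as = map (\<lambda>i. B $$ (i, i)) [0..<n]"
    using B diag by (simp add: diag_mat_def)
  show "size (proots (char_poly A)) = n" using roots len by simp
  have "sum_mset (proots (char_poly A)) = (\<Sum>i = 0..<n. B $$ (i, i))"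
    unfolding roots as_nth by (simp add: sum_mset_sum_list interv_sum_list_conv_sum_set_nat del: mset_map)
  also have "\<dots> = mat_trace A"
    using B mat_trace_similar[OF A sim] by (simp add: mat_trace_def)
  finally show "sum_mset (proots (char_poly A)) = mat_trace A" .
  have "(\<Sum>x\<in>#proots (char_poly A). x\<^sup>2) = (\<Sum>i = 0..<n. (B $$ (i, i))\<^sup>2)"
    unfolding roots as_nth
    by (simp add: sum_mset_sum_list interv_sum_list_conv_sum_set_nat o_def flip: mset_map)
  also have "\<dots> = mat_trace (A * A)"
    using mat_trace_upper_triangular_square[OF B ut] mat_trace_similar[OF mult_carrier_mat[OF A A] sim2]
    by simp
  finally show "(\<Sum>x\<in>#proots (char_poly A). x\<^sup>2) = mat_trace (A * A)" .
qed

lemma eigenvalue_if_in_proots_char_poly: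
  fixes A :: "complex mat"
  assumes A: "A \<in> carrier_mat n n" and "x \<in># proots (char_poly A)"
  shows "eigenvalue A x"
proof -
  have "char_poly A \<noteq> 0" using degree_monic_char_poly[OF A] by auto
  then show ?thesis using assms by (simp add: eigenvalue_root_char_poly[OF A])
qed

section \<open>Strongly regular graphs\<close>

lemma sum_indicator_eq_card:
  "(\<Sum>x = 0..<(N::nat). if P x then 1 else 0) = (of_nat (card {x. x < N \<and> P x}) :: 'a::semiring_1)"
proof -
  have "{0..<N} \<inter> {x. P x} = {x. x < N \<and> P x}" by auto
  then show ?thesis using sum_of_bool_eq[of "{0..<N}" P] by (simp add: of_bool_def)
qed

lemma adj_matrix_carrier: "adj_matrix N E \<in> carrier_mat N N"
  by (simp add: adj_matrix_def)

lemma adj_matrix_index: "i < N \<Longrightarrow> j < N \<Longrightarrow> adj_matrix N E $$ (i, j) = (if E i j then 1 else 0)"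
  by (simp add: adj_matrix_def)

lemma eigenvalue_adj_spectrum: "x \<in># adj_spectrum N E \<Longrightarrow> eigenvalue (adj_matrix N E) x"
  unfolding adj_spectrum_def by (rule eigenvalue_if_in_proots_char_poly[OF adj_matrix_carrier])

lemma sum_mset_map_of_real: "sum_mset (mset (map complex_of_real xs)) = of_real (sum_list xs)"
  by (induction xs) auto

lemma sum_squares_mset_map_of_real:
  "(\<Sum>y\<in>#mset (map complex_of_real xs). y\<^sup>2) = of_real (\<Sum>x\<leftarrow>xs. x\<^sup>2)"
  by (induction xs) auto

lemma energy_eq_sum_abs:
  assumes "adj_spectrum N E = mset (map complex_of_real xs)"
  shows "energy N E = (\<Sum>x\<leftarrow>xs. \<bar>x\<bar>)"
  using assms by (simp add: energy_def sum_mset_sum_list o_def flip: mset_map)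

locale srg =
  fixes N :: nat and E :: "nat \<Rightarrow> nat \<Rightarrow> bool" and k e d :: nat
  assumes params: "srg_params N E k e d"
begin

abbreviation A :: "complex mat" where "A \<equiv> adj_matrix N E"

lemma adj_sym: "i < N \<Longrightarrow> j < N \<Longrightarrow> E i j \<longleftrightarrow> E j i"
  and adj_irrefl: "i < N \<Longrightarrow> \<not> E i i"
  and degree: "i < N \<Longrightarrow> card {x. x < N \<and> E i x} = k"
  and common_adj: "i < N \<Longrightarrow> j < N \<Longrightarrow> E i j \<Longrightarrow> card {x. x < N \<and> E i x \<and> E j x} = e"
  and common_nonadj:
    "i < N \<Longrightarrow> j < N \<Longrightarrow> i \<noteq> j \<Longrightarrow> \<not> E i j \<Longrightarrow> card {x. x < N \<and> E i x \<and> E j x} = d"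
  using params by (auto simp: srg_params_def simple_graph_def)

lemma obtain_edge:
  obtains i j where "i < N" "j < N" "E i j"
  using params by (auto simp: srg_params_def)

lemma obtain_non_edge:
  obtains i j where "i < N" "j < N" "i \<noteq> j" "\<not> E i j"
  using params by (auto simp: srg_params_def)

lemma parameter_bounds: "1 \<le> k" "e + 1 \<le> k" "d \<le> k" "k + 2 \<le> N"
proof -
  obtain i j where ij: "i < N" "j < N" "E i j" by (rule obtain_edge)
  then have "0 < card {x. x < N \<and> E i x}" by (auto simp: card_gt_0_iff)
  then show "1 \<le> k" using degree[OF ij(1)] by simp
  have "\<not> E j j" using adj_irrefl[OF ij(2)] .
  then have "{x. x < N \<and> E i x \<and> E j x} \<subseteq> {x. x < N \<and> E i x} - {j}" by auto
  then have "card {x. x < N \<and> E i x \<and> E j x} \<le> card ({x. x < N \<and> E i x} - {j})"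
    by (intro card_mono) auto
  also have "\<dots> = k - 1" using ij degree[OF ij(1)] by (simp add: card_Diff_singleton)
  finally show "e + 1 \<le> k" using common_adj[OF ij] \<open>1 \<le> k\<close> by simp
  obtain a b where ab: "a < N" "b < N" "a \<noteq> b" "\<not> E a b" by (rule obtain_non_edge)
  have "card {x. x < N \<and> E a x \<and> E b x} \<le> card {x. x < N \<and> E a x}" by (intro card_mono) auto
  then show "d \<le> k" using common_nonadj[OF ab] degree[OF ab(1)] by simp
  have "\<not> E a a" using adj_irrefl[OF ab(1)] .
  with ab have "{x. x < N \<and> E a x} \<subseteq> {0..<N} - {a, b}" by auto
  then have "card {x. x < N \<and> E a x} \<le> card ({0..<N} - {a, b})" by (intro card_mono) auto
  also have "\<dots> = N - 2" using ab by (subst card_Diff_subset) auto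
  finally show "k + 2 \<le> N" using degree[OF ab(1)] ab by simp
qed

lemma card_nbrs_union:
  assumes "i < N" "j < N"
  shows "card ({x. x < N \<and> E i x} \<union> {x. x < N \<and> E j x}) + card {x. x < N \<and> E i x \<and> E j x} = 2 * k"
proof -
  have "{x. x < N \<and> E i x} \<inter> {x. x < N \<and> E j x} = {x. x < N \<and> E i x \<and> E j x}" by auto
  then show ?thesis
    using card_Un_Int[of "{x. x < N \<and> E i x}" "{x. x < N \<and> E j x}"] degree assms by simp
qed

lemma complement_degree:
  assumes i: "i < N"
  shows "card {x. x < N \<and> complement E i x} = N - k - 1"
proof -
  have "{x. x < N \<and> complement E i x} = {0..<N} - insert i {x. x < N \<and> E i x}"
    by (auto simp: complement_def)
  moreover have "card (insert i {x. x < N \<and> E i x}) = k + 1" using degree[OF i] adj_irrefl[OF i] by simp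
  moreover have "insert i {x. x < N \<and> E i x} \<subseteq> {0..<N}" using i by auto
  ultimately show ?thesis by (simp add: card_Diff_subset)
qed

lemma complement_common_nbrs_of_non_edge:
  assumes ij: "i < N" "j < N" "i \<noteq> j" "\<not> E i j"
  shows "card {x. x < N \<and> complement E i x \<and> complement E j x} + 2 * k + 2 = N + d"
proof -
  let ?X = "{x. x < N \<and> E i x} \<union> {x. x < N \<and> E j x}"
  have "\<not> E j i" using ij adj_sym by blast
  then have out: "i \<notin> ?X" "j \<notin> ?X" using ij adj_irrefl by auto
  have "{x. x < N \<and> complement E i x \<and> complement E j x} = {0..<N} - insert i (insert j ?X)"
    by (auto simp: complement_def)
  moreover have sub: "insert i (insert j ?X) \<subseteq> {0..<N}" using ij by auto
  moreover have "card (insert i (insert j ?X)) = card ?X + 2" using out ij(3) by simp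
  moreover have "card (insert i (insert j ?X)) \<le> N" using card_mono[OF _ sub] by simp
  ultimately show ?thesis
    using card_nbrs_union[OF ij(1,2)] common_nonadj[OF ij] by (simp add: card_Diff_subset)
qed

lemma complement_common_nbrs_of_edge:
  assumes ij: "i < N" "j < N" "E i j"
  shows "card {x. x < N \<and> complement E i x \<and> complement E j x} + 2 * k = N + e"
proof -
  let ?U = "{x. x < N \<and> E i x} \<union> {x. x < N \<and> E j x}"
  have "E j i" using ij adj_sym by blast
  then have "{x. x < N \<and> complement E i x \<and> complement E j x} = {0..<N} - ?U"
    using ij by (auto simp: complement_def)
  moreover have sub: "?U \<subseteq> {0..<N}" by auto
  moreover have "card ?U \<le> N" using card_mono[OF _ sub] by simp
  ultimately show ?thesis
    using card_nbrs_union[OF ij(1,2)] common_adj[OF ij] by (simp add: card_Diff_subset)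
qed

lemma complement_parameter_bounds: "2 * k + 2 \<le> N + d" "2 * k \<le> N + e"
proof -
  obtain i j where "i < N" "j < N" "i \<noteq> j" "\<not> E i j" by (rule obtain_non_edge)
  from complement_common_nbrs_of_non_edge[OF this] show "2 * k + 2 \<le> N + d" by linarith
  obtain i j where "i < N" "j < N" "E i j" by (rule obtain_edge)
  from complement_common_nbrs_of_edge[OF this] show "2 * k \<le> N + e" by linarith
qed

lemma complement_srg: "srg N (complement E) (N - k - 1) (N + d - 2 * k - 2) (N + e - 2 * k)"
  unfolding srg_def srg_params_def simple_graph_def
proof (intro conjI allI impI)
  obtain i j where "i < N" "j < N" "i \<noteq> j" "\<not> E i j" by (rule obtain_non_edge)
  then show "\<exists>i<N. \<exists>j<N. complement E i j" by (auto simp: complement_def)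
  obtain i j where "i < N" "j < N" "E i j" by (rule obtain_edge)
  then show "\<exists>i<N. \<exists>j<N. i \<noteq> j \<and> \<not> complement E i j"
    using adj_irrefl by (auto simp: complement_def)
next
  fix i j assume "i < N" "j < N"
  then show "complement E i j = complement E j i" using adj_sym by (simp add: complement_def) blast
next
  fix i assume "i < N"
  then show "\<not> complement E i i" by (simp add: complement_def)
  show "card {x. x < N \<and> complement E i x} = N - k - 1" by (rule complement_degree) fact
next
  fix i j assume "i < N" "j < N" "complement E i j"
  then show "card {x. x < N \<and> complement E i x \<and> complement E j x} = N + d - 2 * k - 2"
    using complement_common_nbrs_of_non_edge[of i j] by (auto simp: complement_def)
next
  fix i j assume "i < N" "j < N" "i \<noteq> j \<and> \<not> complement E i j"
  then show "card {x. x < N \<and> complement E i x \<and> complement E j x} = N + e - 2 * k"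
    using complement_common_nbrs_of_edge[of i j] by (auto simp: complement_def)
qed

lemma adj_matrix_square_index:
  assumes "i < N" "j < N"
  shows "(A * A) $$ (i, j) = (if i = j then of_nat k else if E i j then of_nat e else of_nat d)"
proof -
  have "(A * A) $$ (i, j) = (\<Sum>l = 0..<N. A $$ (i, l) * A $$ (l, j))"
    using assms by (simp add: adj_matrix_def scalar_prod_def)
  also have "\<dots> = (\<Sum>l = 0..<N. if E i l \<and> E j l then 1 else 0)"
  proof (intro sum.cong refl)
    fix l assume "l \<in> {0..<N}"
    then have "l < N" "E l j \<longleftrightarrow> E j l" using adj_sym assms by auto
    then show "A $$ (i, l) * A $$ (l, j) = (if E i l \<and> E j l then 1 else 0)"
      using assms by (simp add: adj_matrix_index)
  qed
  also have "\<dots> = of_nat (card {x. x < N \<and> E i x \<and> E j x})" by (rule sum_indicator_eq_card)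
  finally show ?thesis using assms degree common_adj common_nonadj by auto
qed

lemma adj_matrix_square_mult_vec_index:
  assumes v: "v \<in> carrier_vec N" and i: "i < N"
  shows "(A *\<^sub>v (A *\<^sub>v v)) $ i =
     of_nat k * v $ i + of_nat e * (A *\<^sub>v v) $ i
     + of_nat d * (sum (($) v) {0..<N} - v $ i - (A *\<^sub>v v) $ i)"
proof -
  have Av: "(A *\<^sub>v v) $ i = (\<Sum>l = 0..<N. A $$ (i, l) * v $ l)"
    using i v by (simp add: adj_matrix_def scalar_prod_def)
  have "(A *\<^sub>v (A *\<^sub>v v)) $ i = ((A * A) *\<^sub>v v) $ i"
    using v by (subst assoc_mult_mat_vec[of _ N N _ N]) (auto simp: adj_matrix_carrier)
  also have "\<dots> = (\<Sum>l = 0..<N. (A * A) $$ (i, l) * v $ l)"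
    using i v by (simp add: adj_matrix_def scalar_prod_def)
  also have "\<dots> = (\<Sum>l = 0..<N. of_nat k * (if l = i then v $ l else 0)
       + of_nat e * (A $$ (i, l) * v $ l)
       + of_nat d * (v $ l - (if l = i then v $ l else 0) - A $$ (i, l) * v $ l))"
    using i adj_irrefl
    by (intro sum.cong) (auto simp: adj_matrix_square_index adj_matrix_index algebra_simps)
  also have "\<dots> = of_nat k * v $ i + of_nat e * (\<Sum>l = 0..<N. A $$ (i, l) * v $ l)
       + of_nat d * (sum (($) v) {0..<N} - v $ i - (\<Sum>l = 0..<N. A $$ (i, l) * v $ l))"
    using i by (simp add: sum.distrib sum_subtractf flip: sum_distrib_left)
  finally show ?thesis unfolding Av .
qed

lemma sum_adj_matrix_mult_vec:
  assumes v: "v \<in> carrier_vec N"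
  shows "(\<Sum>i = 0..<N. (A *\<^sub>v v) $ i) = of_nat k * sum (($) v) {0..<N}"
proof -
  have col: "(\<Sum>i = 0..<N. A $$ (i, l)) = of_nat k" if l: "l < N" for l
  proof -
    have "(\<Sum>i = 0..<N. A $$ (i, l)) = (\<Sum>i = 0..<N. if E l i then 1 else 0)"
      using l by (intro sum.cong) (simp_all add: adj_matrix_index adj_sym)
    also have "\<dots> = of_nat k" using degree[OF l] by (simp add: sum_indicator_eq_card)
    finally show ?thesis .
  qed
  have "(\<Sum>i = 0..<N. (A *\<^sub>v v) $ i) = (\<Sum>i = 0..<N. \<Sum>l = 0..<N. A $$ (i, l) * v $ l)"
    using v by (intro sum.cong) (simp_all add: adj_matrix_def scalar_prod_def)
  also have "\<dots> = (\<Sum>l = 0..<N. v $ l * (\<Sum>i = 0..<N. A $$ (i, l)))"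
    by (subst sum.swap) (simp add: sum_distrib_left mult.commute)
  also have "\<dots> = (\<Sum>l = 0..<N. v $ l * of_nat k)" using col by simp
  finally show ?thesis by (simp add: sum_distrib_left mult.commute)
qed

lemma eigenvalue_cases:
  assumes "eigenvalue A x"
  shows "x = of_nat k \<or> x\<^sup>2 - (of_nat e - of_nat d) * x - (of_nat k - of_nat d) = 0"
proof -
  obtain v where v: "v \<in> carrier_vec N" and v0: "v \<noteq> 0\<^sub>v N" and Av: "A *\<^sub>v v = x \<cdot>\<^sub>v v"
    using assms unfolding eigenvalue_def eigenvector_def by (auto simp: adj_matrix_def)
  define \<sigma> where "\<sigma> = sum (($) v) {0..<N}"
  have Avi: "(A *\<^sub>v v) $ i = x * v $ i" if "i < N" for i using that v Av by simp
  have AAvi: "(A *\<^sub>v (A *\<^sub>v v)) $ i = x * (x * v $ i)" if "i < N" for i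
    using that v Av mult_mat_vec[OF adj_matrix_carrier v] by simp
  have column_sum: "x * \<sigma> = of_nat k * \<sigma>"
    using sum_adj_matrix_mult_vec[OF v] unfolding \<sigma>_def by (simp add: Avi sum_distrib_left)
  obtain i where i: "i < N" and vi: "v $ i \<noteq> 0"
    using v v0 by (metis carrier_vecD eq_vecI index_zero_vec)
  have row: "x * (x * v $ i)
      = of_nat k * v $ i + of_nat e * (x * v $ i) + of_nat d * (\<sigma> - v $ i - x * v $ i)"
    using adj_matrix_square_mult_vec_index[OF v i] AAvi[OF i] Avi[OF i] unfolding \<sigma>_def by simp
  show ?thesis
  proof (cases "x = of_nat k")
    case False
    with column_sum have "\<sigma> = 0" by simp
    with row have "(x\<^sup>2 - (of_nat e - of_nat d) * x - (of_nat k - of_nat d)) * v $ i = 0"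
      by (simp add: algebra_simps power2_eq_square)
    with vi show ?thesis by simp
  qed simp
qed

lemma parameter_identity: "int k * (int k - int e - 1) = (int N - int k - 1) * int d"
proof -
  define v :: "complex vec" where "v = vec N (\<lambda>_. 1)"
  have v: "v \<in> carrier_vec N" by (simp add: v_def)
  obtain i where i: "i < N" using obtain_edge by metis
  have Av: "A *\<^sub>v v = of_nat k \<cdot>\<^sub>v v"
  proof (rule eq_vecI)
    fix j assume "j < dim_vec (of_nat k \<cdot>\<^sub>v v)"
    then have j: "j < N" by (simp add: v_def)
    have "(A *\<^sub>v v) $ j = (\<Sum>l = 0..<N. if E j l then 1 else 0)"
      using j by (simp add: adj_matrix_def scalar_prod_def v_def)
    also have "\<dots> = of_nat k" using degree[OF j] by (simp add: sum_indicator_eq_card)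
    finally show "(A *\<^sub>v v) $ j = (of_nat k \<cdot>\<^sub>v v) $ j" using j by (simp add: v_def)
  qed (simp add: adj_matrix_def v_def)
  have "(of_nat k * of_nat k :: complex)
      = of_nat k + of_nat e * of_nat k + of_nat d * (of_nat N - 1 - of_nat k)"
    using adj_matrix_square_mult_vec_index[OF v i] i Av mult_mat_vec[OF adj_matrix_carrier v]
    by (simp add: v_def)
  then have "complex_of_int (int k * (int k - int e - 1)) = complex_of_int ((int N - int k - 1) * int d)"
    by (simp add: algebra_simps)
  then show ?thesis using of_int_eq_iff by blast
qed

lemma mat_trace_adj_matrix: "mat_trace A = 0"
  using adj_irrefl by (simp add: mat_trace_def adj_matrix_def)

lemma mat_trace_adj_matrix_square: "mat_trace (A * A) = of_nat N * of_nat k"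
  by (simp add: mat_trace_def adj_matrix_square_index adj_matrix_carrier[THEN carrier_matD(1)])

lemma size_adj_spectrum: "size (adj_spectrum N E) = N"
  and sum_adj_spectrum: "sum_mset (adj_spectrum N E) = 0"
  and sum_squares_adj_spectrum: "(\<Sum>x\<in>#adj_spectrum N E. x\<^sup>2) = of_nat N * of_nat k"
  using proots_char_poly_power_sums[OF adj_matrix_carrier, of N E]
  unfolding adj_spectrum_def mat_trace_adj_matrix mat_trace_adj_matrix_square by simp_all

end

section \<open>Real lists with three values\<close>

lemma sum_list_abs_three_values:
  fixes xs :: "real list"
  assumes vals: "set xs \<subseteq> {a, b, c}" and "a \<ge> 0" "b \<ge> 0" "c < 0"
    and sum: "sum_list xs = 0" and squares: "(\<Sum>x\<leftarrow>xs. x\<^sup>2) = q"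
  shows "(\<Sum>x\<leftarrow>xs. \<bar>x\<bar>) = -2 * c * (q + a * b * length xs) / ((c - a) * (c - b))"
proof -
  define C where "C = -2 * c / ((c - a) * (c - b))"
  have nz: "c - a \<noteq> 0" "c - b \<noteq> 0" using assms by auto
  have abs_eq: "\<bar>x\<bar> = x + C * (x\<^sup>2 - (a + b) * x + a * b)" if "x \<in> set xs" for x
  proof -
    have "c\<^sup>2 - (a + b) * c + a * b = (c - a) * (c - b)" by (simp add: algebra_simps power2_eq_square)
    then have "c + C * (c\<^sup>2 - (a + b) * c + a * b) = - c" unfolding C_def using nz by simp
    moreover have "x = a \<or> x = b \<or> x = c" using vals that by auto
    ultimately show ?thesis using assms by (auto simp: algebra_simps power2_eq_square)
  qed
  have "(\<Sum>x\<leftarrow>xs. \<bar>x\<bar>) = (\<Sum>x\<leftarrow>xs. x + C * (x\<^sup>2 - (a + b) * x + a * b))"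
    using abs_eq by (intro arg_cong[where f = sum_list] map_cong) auto
  also have "\<dots> = sum_list xs + C * ((\<Sum>x\<leftarrow>xs. x\<^sup>2) - (a + b) * sum_list xs + a * b * length xs)"
    by (induction xs) (auto simp: algebra_simps)
  finally show ?thesis unfolding sum squares C_def by simp
qed

lemma indicator_quadratic_on_three_points:
  fixes a b c :: real
  obtains \<alpha> \<beta> \<gamma> where "\<And>x. x \<in> {a, b, c} \<Longrightarrow> (if x = a then 1 else 0) = \<alpha> * x\<^sup>2 + \<beta> * x + \<gamma>"
proof -
  consider "b = a" "c = a"
    | "b = a \<or> c = a \<or> b = c" "a \<noteq> b \<or> a \<noteq> c"
    | "a \<noteq> b" "a \<noteq> c" "b \<noteq> c"
    by blast
  then show ?thesis
  proof cases
    case 1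
    then show ?thesis by (intro that[of 0 0 1]) auto
  next
    case 2
    obtain w where w: "w \<noteq> a" "{a, b, c} = {a, w}"
    proof (cases "b = a")
      case True
      then show ?thesis using 2 that[of c] by auto
    next
      case False
      then show ?thesis using 2 that[of b] by auto
    qed
    have "a - w \<noteq> 0" using w by simp
    show ?thesis
    proof (rule that[of 0 "1 / (a - w)" "- w / (a - w)"])
      fix x assume "x \<in> {a, b, c}"
      then have "(if x = a then 1 else 0) = (x - w) / (a - w)" using w \<open>a - w \<noteq> 0\<close> by auto
      then show "(if x = a then 1 else 0) = 0 * x\<^sup>2 + 1 / (a - w) * x + - w / (a - w)"
        by (simp add: diff_divide_distrib)
    qed
  next
    case 3
    define \<alpha> where "\<alpha> = 1 / ((a - b) * (a - c))"
    show ?thesis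
    proof (rule that[of \<alpha> "- \<alpha> * (b + c)" "\<alpha> * b * c"])
      fix x assume "x \<in> {a, b, c}"
      then have "(if x = a then 1 else 0) = \<alpha> * ((x - b) * (x - c))"
        using 3 unfolding \<alpha>_def by auto
      then show "(if x = a then 1 else 0) = \<alpha> * x\<^sup>2 + - \<alpha> * (b + c) * x + \<alpha> * b * c"
        by (simp add: algebra_simps power2_eq_square)
    qed
  qed
qed

lemma mset_eq_if_power_sums_eq:
  fixes xs ys :: "real list"
  assumes vals: "set xs \<subseteq> {a, b, c}" "set ys \<subseteq> {a, b, c}"
    and "length xs = length ys" "sum_list xs = sum_list ys"
    and "(\<Sum>x\<leftarrow>xs. x\<^sup>2) = (\<Sum>x\<leftarrow>ys. x\<^sup>2)"
  shows "mset xs = mset ys"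
proof (rule multiset_eqI)
  fix y
  show "count (mset xs) y = count (mset ys) y"
  proof (cases "y \<in> {a, b, c}")
    case False
    then show ?thesis using vals by (metis count_mset_0_iff subsetD)
  next
    case True
    then obtain u v where "{a, b, c} = {y, u, v}" by auto
    then obtain \<alpha> \<beta> \<gamma>
      where ind: "\<And>x. x \<in> {a, b, c} \<Longrightarrow> (if x = y then 1 else 0) = \<alpha> * x\<^sup>2 + \<beta> * x + \<gamma>"
      using indicator_quadratic_on_three_points[of y u v] by metis
    have "real (count (mset zs) y) = \<alpha> * (\<Sum>x\<leftarrow>zs. x\<^sup>2) + \<beta> * sum_list zs + \<gamma> * length zs"
      if "set zs \<subseteq> {a, b, c}" for zs
    proof -
      have "real (count (mset zs) y) = (\<Sum>x\<leftarrow>zs. if x = y then 1 else 0)"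
        by (induction zs) auto
      also have "\<dots> = (\<Sum>x\<leftarrow>zs. \<alpha> * x\<^sup>2 + \<beta> * x + \<gamma>)"
      proof (intro arg_cong[where f = sum_list] map_cong refl)
        fix x assume "x \<in> set zs"
        then show "(if x = y then 1 else 0) = \<alpha> * x\<^sup>2 + \<beta> * x + \<gamma>" using ind that by blast
      qed
      also have "\<dots> = \<alpha> * (\<Sum>x\<leftarrow>zs. x\<^sup>2) + \<beta> * sum_list zs + \<gamma> * length zs"
        by (induction zs) (auto simp: algebra_simps)
      finally show ?thesis .
    qed
    from this[OF vals(1)] this[OF vals(2)] show ?thesis using assms(3-5) by simp
  qed
qed

lemma rational_root_monic_quadratic_Ints:
  fixes x :: real and b c :: int
  assumes "x \<in> \<rat>" and root: "x\<^sup>2 + of_int b * x + of_int c = 0"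
  shows "x \<in> \<int>"
proof -
  obtain p q :: int where q: "q > 0" and cop: "coprime p q" and x: "x = of_int p / of_int q"
    using assms(1) by (rule Rats_cases') blast
  have "of_int (p\<^sup>2 + b * p * q + c * q\<^sup>2) = (of_int q)\<^sup>2 * (x\<^sup>2 + of_int b * x + of_int c :: real)"
    using q unfolding x by (simp add: field_simps power2_eq_square)
  then have "(of_int (p\<^sup>2 + b * p * q + c * q\<^sup>2) :: real) = 0" using root by simp
  then have "p\<^sup>2 + b * p * q + c * q\<^sup>2 = 0" by (simp only: of_int_eq_0_iff)
  then have "p\<^sup>2 = q * (- b * p - c * q)" by (simp add: algebra_simps power2_eq_square)
  then have "q dvd p\<^sup>2" by simp
  moreover have "coprime (p\<^sup>2) q" using cop by simp
  ultimately have "is_unit q" by (metis coprime_common_divisor dvd_refl)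
  then have "q = 1" using q by simp
  then show ?thesis using x by simp
qed

section \<open>Energy and spectrum of a strongly regular graph\<close>

definition srg_r :: "real \<Rightarrow> real \<Rightarrow> real \<Rightarrow> real" where
  "srg_r k e d = ((e - d) + sqrt ((e - d)\<^sup>2 + 4 * (k - d))) / 2"

definition srg_s :: "real \<Rightarrow> real \<Rightarrow> real \<Rightarrow> real" where
  "srg_s k e d = ((e - d) - sqrt ((e - d)\<^sup>2 + 4 * (k - d))) / 2"

lemma srg_r_add_srg_s: "srg_r k e d + srg_s k e d = e - d"
  by (simp add: srg_r_def srg_s_def field_simps)

lemma srg_r_mult_srg_s:
  assumes "d \<le> k"
  shows "srg_r k e d * srg_s k e d = d - k"
proof -
  have "(sqrt ((e - d)\<^sup>2 + 4 * (k - d)))\<^sup>2 = (e - d)\<^sup>2 + 4 * (k - d)" using assms by simp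
  then show ?thesis by (simp add: srg_r_def srg_s_def field_simps power2_eq_square)
qed

lemma srg_r_nonneg:
  assumes "d \<le> k"
  shows "srg_r k e d \<ge> 0"
proof -
  have "sqrt ((e - d)\<^sup>2) \<le> sqrt ((e - d)\<^sup>2 + 4 * (k - d))" using assms by (intro real_sqrt_le_mono) simp
  then show ?thesis unfolding srg_r_def by simp
qed

lemma srg_s_le_minus_one:
  assumes "d \<le> k" "e + 1 \<le> k"
  shows "srg_s k e d \<le> -1"
proof -
  have "(1 + srg_r k e d) * (1 + srg_s k e d) = 1 + (e - d) + (d - k)"
    using srg_r_add_srg_s[of k e d] srg_r_mult_srg_s[OF assms(1), of e] by (simp add: algebra_simps)
  also have "\<dots> \<le> 0" using assms by simp
  finally show ?thesis using srg_r_nonneg[OF assms(1), of e]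
    by (smt (verit) mult_pos_pos)
qed

lemma srg_r_srg_s_complement:
  "srg_r (N - k - 1) (N + d - 2 * k - 2) (N + e - 2 * k) = -1 - srg_s k e d"
  "srg_s (N - k - 1) (N + d - 2 * k - 2) (N + e - 2 * k) = -1 - srg_r k e d"
proof -
  have "((N + d - 2 * k - 2) - (N + e - 2 * k))\<^sup>2 + 4 * ((N - k - 1) - (N + e - 2 * k))
      = (e - d)\<^sup>2 + 4 * (k - d)"
    by (simp add: algebra_simps power2_eq_square)
  then show "srg_r (N - k - 1) (N + d - 2 * k - 2) (N + e - 2 * k) = -1 - srg_s k e d"
    and "srg_s (N - k - 1) (N + d - 2 * k - 2) (N + e - 2 * k) = -1 - srg_r k e d"
    unfolding srg_r_def srg_s_def by (simp_all add: field_simps)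
qed

context srg
begin

definition r :: real where "r = srg_r (real k) (real e) (real d)"
definition s :: real where "s = srg_s (real k) (real e) (real d)"

lemma r_add_s: "r + s = real e - real d"
  unfolding r_def s_def by (rule srg_r_add_srg_s)

lemma r_mult_s: "r * s = real d - real k"
  unfolding r_def s_def using parameter_bounds by (intro srg_r_mult_srg_s) simp

lemma r_nonneg: "r \<ge> 0"
  unfolding r_def using parameter_bounds by (intro srg_r_nonneg) simp

lemma s_le_minus_one: "s \<le> -1"
  unfolding s_def using parameter_bounds by (intro srg_s_le_minus_one) simp_all

lemma eigenvalue_in_k_r_s:
  assumes "eigenvalue A x"
  shows "x \<in> complex_of_real ` {real k, r, s}"
proof -
  have "(x - of_real r) * (x - of_real s) = x\<^sup>2 - of_real (r + s) * x + of_real (r * s)"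
    by (simp add: algebra_simps power2_eq_square)
  then have factor:
    "x\<^sup>2 - (of_nat e - of_nat d) * x - (of_nat k - of_nat d) = (x - of_real r) * (x - of_real s)"
    unfolding r_add_s r_mult_s by simp
  have "x = of_nat k \<or> (x - of_real r) * (x - of_real s) = 0"
    using eigenvalue_cases[OF assms] unfolding factor .
  then show ?thesis by auto
qed

lemma adj_spectrum_real:
  obtains xs where "adj_spectrum N E = mset (map complex_of_real xs)" "set xs \<subseteq> {real k, r, s}"
    "length xs = N" "sum_list xs = 0" "(\<Sum>x\<leftarrow>xs. x\<^sup>2) = real N * real k"
proof -
  obtain ys where ys: "mset ys = adj_spectrum N E" using ex_mset by blast
  have real: "complex_of_real (Re y) = y" "Re y \<in> {real k, r, s}" if "y \<in> set ys" for y
  proof -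
    have "y \<in># adj_spectrum N E" using that by (simp flip: ys)
    then have "y \<in> complex_of_real ` {real k, r, s}" by (intro eigenvalue_in_k_r_s eigenvalue_adj_spectrum)
    then obtain t where "t \<in> {real k, r, s}" "y = complex_of_real t" by blast
    then show "complex_of_real (Re y) = y" "Re y \<in> {real k, r, s}" by simp_all
  qed
  define xs where "xs = map Re ys"
  have "map (\<lambda>y. complex_of_real (Re y)) ys = ys" by (rule map_idI) (rule real)
  then have spec: "adj_spectrum N E = mset (map complex_of_real xs)"
    using ys by (simp add: xs_def o_def)
  show ?thesis
  proof (rule that[OF spec])
    show "set xs \<subseteq> {real k, r, s}" using real(2) unfolding xs_def by auto
    have "size (mset (map complex_of_real xs)) = N" using size_adj_spectrum unfolding spec .
    then show "length xs = N" by simp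
    have "complex_of_real (sum_list xs) = 0"
      using sum_adj_spectrum unfolding spec sum_mset_map_of_real .
    then show "sum_list xs = 0" by simp
    have "complex_of_real (\<Sum>x\<leftarrow>xs. x\<^sup>2) = of_nat N * of_nat k"
      using sum_squares_adj_spectrum unfolding spec sum_squares_mset_map_of_real .
    also have "\<dots> = complex_of_real (real N * real k)"
      by (simp only: of_real_mult of_real_of_nat_eq)
    finally show "(\<Sum>x\<leftarrow>xs. x\<^sup>2) = real N * real k"
      by (simp only: of_real_eq_iff)
  qed
qed

lemma energy_eq: "energy N E = 2 * real N * real k * (1 + r) * (- s) / ((real k - s) * (r - s))"
proof -
  obtain xs where spec: "adj_spectrum N E = mset (map complex_of_real xs)"
    and xs: "set xs \<subseteq> {real k, r, s}" "length xs = N" "sum_list xs = 0"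
      "(\<Sum>x\<leftarrow>xs. x\<^sup>2) = real N * real k"
    by (rule adj_spectrum_real)
  have "energy N E = -2 * s * (real N * real k + real k * r * real N) / ((s - real k) * (s - r))"
    using sum_list_abs_three_values[OF xs(1) _ r_nonneg _ xs(3,4)] s_le_minus_one xs(2)
    unfolding energy_eq_sum_abs[OF spec] by simp
  moreover have
    "-2 * s * (real N * real k + real k * r * real N) = 2 * real N * real k * (1 + r) * (- s)"
    by (simp add: algebra_simps)
  moreover have "(s - real k) * (s - r) = (real k - s) * (r - s)"
    by (simp add: algebra_simps)
  ultimately show ?thesis by simp
qed

lemma isospectral_if_same_params:
  assumes "srg N E' k e d"
  shows "isospectral N E N E'"
proof -
  obtain xs where spec: "adj_spectrum N E = mset (map complex_of_real xs)"
    and xs: "set xs \<subseteq> {real k, r, s}" "length xs = N" "sum_list xs = 0"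
      "(\<Sum>x\<leftarrow>xs. x\<^sup>2) = real N * real k"
    by (rule adj_spectrum_real)
  obtain ys where spec': "adj_spectrum N E' = mset (map complex_of_real ys)"
    and ys: "set ys \<subseteq> {real k, r, s}" "length ys = N" "sum_list ys = 0"
      "(\<Sum>y\<leftarrow>ys. y\<^sup>2) = real N * real k"
    by (rule srg.adj_spectrum_real[OF assms])
  have "mset xs = mset ys" using mset_eq_if_power_sums_eq[OF xs(1) ys(1)] xs ys by simp
  then show ?thesis unfolding isospectral_def spec spec' by simp
qed

lemma degree_eq_if_isospectral:
  assumes "srg N E' k' e' d'" and "isospectral N E N E'"
  shows "k' = k"
proof -
  have "(of_nat N * of_nat k :: complex) = of_nat N * of_nat k'"
    using sum_squares_adj_spectrum srg.sum_squares_adj_spectrum[OF assms(1)] assms(2)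
    unfolding isospectral_def by metis
  then show ?thesis using parameter_bounds by simp
qed

lemma energy_complement:
  "energy N (complement E)
     = 2 * real N * (real N - real k - 1) * (1 + r) * (- s) / ((real N - real k + r) * (r - s))"
proof -
  interpret complement: srg N "complement E" "N - k - 1" "N + d - 2 * k - 2" "N + e - 2 * k"
    by (rule complement_srg)
  have nat_diffs: "real (N - k - 1) = real N - real k - 1"
    "real (N + d - 2 * k - 2) = real N + real d - 2 * real k - 2"
    "real (N + e - 2 * k) = real N + real e - 2 * real k"
    using parameter_bounds complement_parameter_bounds by (simp_all add: of_nat_diff)
  have r': "complement.r = -1 - s" and s': "complement.s = -1 - r"
    unfolding complement.r_def complement.s_def r_def s_def nat_diffs
    using srg_r_srg_s_complement[where N = "real N" and k = "real k" and e = "real e" and d = "real d"]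
    by simp_all
  show ?thesis
    unfolding complement.energy_eq r' s' nat_diffs(1) by (simp add: algebra_simps)
qed

lemma energy_eq_complement_iff:
  "energy N E = energy N (complement E)
     \<longleftrightarrow> real k * (real N - real k + r) = (real N - real k - 1) * (real k - s)"
proof -
  have pos: "real k - s > 0" "r - s > 0" "real N - real k + r > 0"
    using r_nonneg s_le_minus_one parameter_bounds by auto
  define F where "F = 2 * real N * (1 + r) * (- s) / (r - s)"
  have "F \<noteq> 0" using r_nonneg s_le_minus_one parameter_bounds pos by (simp add: F_def)
  have E: "energy N E = F * (real k / (real k - s))"
    unfolding energy_eq F_def using pos by (simp add: field_simps)
  have E': "energy N (complement E) = F * ((real N - real k - 1) / (real N - real k + r))"
    unfolding energy_complement F_def using pos by (simp add: field_simps)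
  have "energy N E = energy N (complement E)
      \<longleftrightarrow> real k / (real k - s) = (real N - real k - 1) / (real N - real k + r)"
    unfolding E E' using \<open>F \<noteq> 0\<close> by (simp only: mult_cancel_left) simp
  also have "\<dots> \<longleftrightarrow> real k * (real N - real k + r) = (real N - real k - 1) * (real k - s)"
    using pos by (simp add: frac_eq_eq)
  finally show ?thesis .
qed

lemma order_eq_if_isospectral_complement:
  assumes "isospectral N E N (complement E)"
  shows "N = 2 * k + 1"
proof -
  have "N - k - 1 = k" using degree_eq_if_isospectral[OF complement_srg assms] .
  then show ?thesis using parameter_bounds by linarith
qed

lemma isospectral_complement_if_conference:
  assumes "N = 2 * k + 1" and "d = e + 1"
  shows "isospectral N E N (complement E)"
proof -
  have "srg N (complement E) k e d" using complement_srg assms by simp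
  then show ?thesis by (rule isospectral_if_same_params)
qed

lemma d_eq: "real d = real k + r * s"
  using r_mult_s by simp

lemma e_eq: "real e = real k + r * s + r + s"
  using r_add_s r_mult_s by simp

end

section \<open>Orthogonal array parameters\<close>

definition OA_params :: "nat \<Rightarrow> nat \<Rightarrow> nat \<Rightarrow> nat \<Rightarrow> nat \<Rightarrow> nat \<Rightarrow> bool" where
  "OA_params n m N k e d \<longleftrightarrow>
     N = n\<^sup>2 \<and> k = m * (n - 1) \<and> int e = int m ^ 2 - 3 * int m + int n \<and> d = m * (m - 1)"

context srg
begin

lemma eigenvalue_relations_if_energy_balance:
  assumes "energy N E = energy N (complement E)"
  shows "real k = s * (1 + s - r)" and "real N = (r - s)\<^sup>2"
proof -
  define K' where "K' = real N - real k - 1"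
  have "K' \<ge> 1" using parameter_bounds unfolding K'_def by simp
  have balance: "real k * (1 + r) = - K' * s"
    using assms unfolding energy_eq_complement_iff K'_def by (simp add: algebra_simps)
  have identity: "real k * (real k - real e - 1) = K' * real d"
  proof -
    have "real_of_int (int k * (int k - int e - 1)) = real_of_int ((int N - int k - 1) * int d)"
      using parameter_identity by simp
    then show ?thesis unfolding K'_def by simp
  qed
  have "K' * (s * (1 + s)) = - (real k * (1 + r)) * (1 + s)"
    using balance by (simp add: algebra_simps)
  also have "\<dots> = real k * (real k - real e - 1)"
    by (simp add: e_eq algebra_simps)
  also have "\<dots> = K' * (real k + r * s)"
    using identity d_eq by simp
  finally have "s * (1 + s) = real k + r * s" using \<open>K' \<ge> 1\<close> by simp
  then show k: "real k = s * (1 + s - r)" by (simp add: algebra_simps)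
  have "s * (K' + (1 + s - r) * (1 + r)) = 0"
    using balance unfolding k by (simp add: algebra_simps)
  then have "K' + (1 + s - r) * (1 + r) = 0" using s_le_minus_one by simp
  then have K': "K' = - ((1 + s - r) * (1 + r))" by (simp add: eq_neg_iff_add_eq_0)
  have "real N = real k + K' + 1" unfolding K'_def by simp
  also have "\<dots> = (r - s)\<^sup>2" unfolding K' k by (simp add: algebra_simps power2_eq_square)
  finally show "real N = (r - s)\<^sup>2" .
qed

lemma OA_params_if_eigenvalues:
  assumes r: "r = real n - real m" and s: "s = - real m"
    and k: "real k = s * (1 + s - r)" and N: "real N = (r - s)\<^sup>2"
    and "0 < n" "0 < m"
  shows "OA_params n m N k e d"
  unfolding OA_params_def
proof (intro conjI)
  have k': "real k = real m * (real n - 1)" using k unfolding r s by (simp add: algebra_simps)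
  have "real N = real (n\<^sup>2)" using N unfolding r s by simp
  then show "N = n\<^sup>2" by (simp only: of_nat_eq_iff)
  have "real k = real (m * (n - 1))" using k' \<open>0 < n\<close> by (simp add: of_nat_diff)
  then show "k = m * (n - 1)" by (simp only: of_nat_eq_iff)
  have "real e = real m ^ 2 - 3 * real m + real n"
    unfolding e_eq k' r s by (simp add: algebra_simps power2_eq_square)
  then have "real_of_int (int e) = real_of_int (int m ^ 2 - 3 * int m + int n)" by simp
  then show "int e = int m ^ 2 - 3 * int m + int n" by (simp only: of_int_eq_iff)
  have "real d = real (m * (m - 1))"
    unfolding d_eq k' r s using \<open>0 < m\<close> by (simp add: of_nat_diff algebra_simps)
  then show "d = m * (m - 1)" by (simp only: of_nat_eq_iff)
qed

lemma eigenvalues_if_OA_params: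
  assumes "OA_params n m N k e d" and "0 < n"
  shows "r = real n - real m" and "s = - real m"
proof -
  have k: "real k = real m * real n - real m"
    using assms by (simp add: OA_params_def of_nat_diff algebra_simps)
  have e: "real e = real m ^ 2 - 3 * real m + real n"
  proof -
    have "real_of_int (int e) = real_of_int (int m ^ 2 - 3 * int m + int n)"
      using assms by (simp add: OA_params_def)
    then show ?thesis by simp
  qed
  have d: "real d = real m ^ 2 - real m"
    using assms by (cases m) (simp_all add: OA_params_def algebra_simps power2_eq_square)
  have disc: "(real e - real d)\<^sup>2 + 4 * (real k - real d) = (real n)\<^sup>2"
    unfolding e d k by (simp add: algebra_simps power2_eq_square)
  show "r = real n - real m" and "s = - real m"
    unfolding r_def s_def srg_r_def srg_s_def disc by (simp_all add: e d field_simps)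
qed

lemma OA_params_if_energy_balance:
  assumes "energy N E = energy N (complement E)" and "\<not> isospectral N E N (complement E)"
  obtains n m where "0 < n" "0 < m" "m \<noteq> n + 1" "2 * m \<noteq> n + 1" "OA_params n m N k e d"
proof -
  note k = eigenvalue_relations_if_energy_balance(1)[OF assms(1)]
  note N = eigenvalue_relations_if_energy_balance(2)[OF assms(1)]
  have not_conference: "r + s \<noteq> -1"
  proof
    assume "r + s = -1"
    then have r: "r = -1 - s" by simp
    have "real d = real (e + 1)" using \<open>r + s = -1\<close> r_add_s by simp
    then have "d = e + 1" by (simp only: of_nat_eq_iff)
    moreover have "real N = real (2 * k + 1)"
      using N k unfolding r by (simp add: algebra_simps power2_eq_square)
    then have "N = 2 * k + 1" by (simp only: of_nat_eq_iff)
    ultimately show False using assms(2) isospectral_complement_if_conference by blast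
  qed
  have "1 + real e - real d = 1 + r + s" using r_add_s by linarith
  then have "s * (1 + real e - real d) = s * (1 + r + s)" by simp
  also have "\<dots> = 2 * (real k + r * s) - real k" using k by (simp add: algebra_simps)
  also have "\<dots> = 2 * real d - real k" using d_eq by simp
  finally have "s * (1 + real e - real d) = 2 * real d - real k" .
  moreover have "1 + real e - real d \<noteq> 0" using not_conference r_add_s by simp
  ultimately have "s = (2 * real d - real k) / (1 + real e - real d)"
    by (simp add: eq_divide_eq)
  then have "s \<in> \<rat>" by simp
  moreover have "s\<^sup>2 + of_int (int d - int e) * s + of_int (int d - int k) = 0"
  proof -
    have de: "of_int (int d - int e) = - (r + s)" and dk: "of_int (int d - int k) = r * s"
      using r_add_s r_mult_s by simp_all
    show ?thesis by (simp only: de dk) (simp add: algebra_simps power2_eq_square)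
  qed
  ultimately have "s \<in> \<int>" by (rule rational_root_monic_quadratic_Ints)
  have "r = real e - real d - s" using r_add_s by simp
  then have "r \<in> \<int>" using \<open>s \<in> \<int>\<close> by (simp add: Ints_diff)
  have "- s \<in> \<nat>" using \<open>s \<in> \<int>\<close> s_le_minus_one by (simp add: Nats_altdef2)
  then obtain m where m: "- s = real m" by (rule Nats_cases)
  have "r - s \<in> \<nat>" using \<open>r \<in> \<int>\<close> \<open>s \<in> \<int>\<close> r_nonneg s_le_minus_one
    by (simp add: Nats_altdef2 Ints_diff)
  then obtain n where n: "r - s = real n" by (rule Nats_cases)
  have r: "r = real n - real m" and s: "s = - real m" using m n by simp_all
  show ?thesis
  proof (rule that)
    show "0 < n" "0 < m" using r s r_nonneg s_le_minus_one by simp_all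
    show "m \<noteq> n + 1" using r r_nonneg by auto
    show "2 * m \<noteq> n + 1" using r s not_conference by auto
    show "OA_params n m N k e d"
      using r s k N \<open>0 < n\<close> \<open>0 < m\<close> by (rule OA_params_if_eigenvalues)
  qed
qed

lemma energy_balance_if_OA_params:
  assumes OA: "OA_params n m N k e d" and "0 < n" and "2 * m \<noteq> n + 1"
  shows "energy N E = energy N (complement E)" and "\<not> isospectral N E N (complement E)"
proof -
  have N: "real N = real n ^ 2" and k: "real k = real m * real n - real m"
    using OA \<open>0 < n\<close> by (simp_all add: OA_params_def of_nat_diff algebra_simps)
  show "energy N E = energy N (complement E)"
    unfolding energy_eq_complement_iff eigenvalues_if_OA_params[OF OA \<open>0 < n\<close>] N k
    by (simp add: algebra_simps power2_eq_square)
  show "\<not> isospectral N E N (complement E)"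
  proof
    assume "isospectral N E N (complement E)"
    then have "real N = 2 * real k + 1" using order_eq_if_isospectral_complement by simp
    then have "(real n - 1) * (real n + 1 - 2 * real m) = 0"
      unfolding N k by (simp add: algebra_simps power2_eq_square)
    then have "n = 1 \<or> n + 1 = 2 * m" by auto
    then show False using assms parameter_bounds by (auto simp: OA_params_def)
  qed
qed

end

lemma energy_balance_iff_OA_params:
  assumes "strongly_regular N E"
  shows "(energy N E = energy N (complement E) \<and> \<not> isospectral N E N (complement E))
    \<longleftrightarrow> (\<exists>n m. 0 < n \<and> 0 < m \<and> m \<noteq> n + 1 \<and> 2 * m \<noteq> n + 1 \<and>
          (\<exists>k e d. srg_params N E k e d \<and> OA_params n m N k e d))"
proof
  assume balance: "energy N E = energy N (complement E) \<and> \<not> isospectral N E N (complement E)"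
  obtain k e d where params: "srg_params N E k e d"
    using assms unfolding strongly_regular_def by blast
  interpret srg N E k e d using params by (rule srg.intro)
  obtain n m where "0 < n" "0 < m" "m \<noteq> n + 1" "2 * m \<noteq> n + 1" "OA_params n m N k e d"
    using balance OA_params_if_energy_balance by blast
  with params show "\<exists>n m. 0 < n \<and> 0 < m \<and> m \<noteq> n + 1 \<and> 2 * m \<noteq> n + 1 \<and>
      (\<exists>k e d. srg_params N E k e d \<and> OA_params n m N k e d)" by blast
next
  assume "\<exists>n m. 0 < n \<and> 0 < m \<and> m \<noteq> n + 1 \<and> 2 * m \<noteq> n + 1 \<and>
      (\<exists>k e d. srg_params N E k e d \<and> OA_params n m N k e d)"
  then obtain n m k e d where "0 < n" "2 * m \<noteq> n + 1"
    and params: "srg_params N E k e d" and OA: "OA_params n m N k e d"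
    by blast
  interpret srg N E k e d using params by (rule srg.intro)
  show "energy N E = energy N (complement E) \<and> \<not> isospectral N E N (complement E)"
    using energy_balance_if_OA_params[OF OA \<open>0 < n\<close> \<open>2 * m \<noteq> n + 1\<close>] by blast
qed

theorem mainTheorem14:
  fixes N :: nat and E :: "nat \<Rightarrow> nat \<Rightarrow> bool"
  assumes "strongly_regular N E"
  shows "(energy N E = energy N (complement E) \<and>
          \<not> isospectral N E N (complement E))
     \<longleftrightarrow> (\<exists>n m :: nat. n > 0 \<and> m > 0 \<and> m \<noteq> n + 1 \<and> 2 * m \<noteq> n + 1 \<and>
           (\<exists>k e d. srg_params N E k e d \<and> N = n ^ 2 \<and> k = m * (n - 1) \<and>
              int e = int m ^ 2 - 3 * int m + int n \<and> d = m * (m - 1)))"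
  using energy_balance_iff_OA_params[OF assms] unfolding OA_params_def .

end
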